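(* Let $(\lambda,\mu,\nu,b,c)$ be a compatible tower with $\nu=(\nu_1,\dots,\nu_r)$. Let \[ \lambda'=\Big\langle\bigcup_{i=1}^r(\nu_i+b_i)\Big\rangle,\qquad \mu'=\Big\langle\bigcup_{i=1}^r(\nu_i+c_i)\Big\rangle . \] Then $(\lambda',\mu',\nu,b,c)$ is a compatible scaffolded tower, and $(\lambda',\mu',\nu,b,c)\le(\lambda,\mu,\nu,b,c)$.
   Context: $\mathbb{N}^3$ carries the componentwise partial order. A $3$-dimensional Young diagram is a finite down-closed subset of $\mathbb{N}^3$. A tower is a triple $(\lambda,\nu,b)$ with $\lambda$ a $3$-dimensional Young diagram, $\nu=(\nu_1,\dots,\nu_r)$ with $\nu_i=\{(0,0,z): z\in\mathbb{N}, 0\le z<n_i\}$ ($n_i\ge1$), $b_i\in\mathbb{Z}^3$, such that the $\nu_i+b_i$ are pairwise disjoint subsets of $\lambda$ and, for all $w\in\mathbb{N}^3$ and $v_i\in\nu_i$ with $v_i+b_i+w\in\lambda$, $v_i+w\in\nu_i$. A compatible tower $(\lambda,\mu,\nu,b,c)$ is one where $(\lambda,\nu,b)$ and $(\mu,\nu,c)$ are towers. For $T\subseteq\mathbb{N}^3$, its order ideal is $\langle T\rangle=\{p\in\mathbb{N}^3: p\le t \text{ for some } t\in T\}$. A tower $(\lambda,\nu,b)$ is scaffolded if $\lambda=\langle\bigcup_i(\nu_i+b_i)\rangle$; a compatible tower is scaffolded if both $(\lambda,\nu,b)$ and $(\mu,\nu,c)$ are. Partial order on compatible towers: $(\lambda,\mu,\nu,b,c)\le(\lambda',\mu',\nu',b',c')$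 if $\lambda\subseteq\lambda'$, $\mu\subseteq\mu'$, writing $\nu=(\nu_i)_{i\in I}$ and $\nu'=(\nu'_j)_{j\in J}$ there is an injection $\iota\colon I\to J$ with $\nu_i\subseteq\nu'_{\iota(i)}$, and $|\lambda\cap\mu|-|\nu|\le|\lambda'\cap\mu'|-|\nu'|$, where $|\nu|=\sum_i|\nu_i|$. *)

theory Defs
  imports Main
begin

type_synonym pt = "nat \<times> nat \<times> nat"
type_synonym ipt = "int \<times> int \<times> int"

fun le3 :: "pt \<Rightarrow> pt \<Rightarrow> bool" where
  "le3 (a1,a2,a3) (b1,b2,b3) \<longleftrightarrow> a1 \<le> b1 \<and> a2 \<le> b2 \<and> a3 \<le> b3"

fun le3z :: "ipt \<Rightarrow> ipt \<Rightarrow> bool" where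
  "le3z (a1,a2,a3) (b1,b2,b3) \<longleftrightarrow> a1 \<le> b1 \<and> a2 \<le> b2 \<and> a3 \<le> b3"

fun emb :: "pt \<Rightarrow> ipt" where
  "emb (x,y,z) = (int x, int y, int z)"

fun addz :: "ipt \<Rightarrow> ipt \<Rightarrow> ipt" where
  "addz (a1,a2,a3) (b1,b2,b3) = (a1+b1, a2+b2, a3+b3)"

definition young :: "pt set \<Rightarrow> bool" where
  "young L \<longleftrightarrow> finite L \<and> (\<forall>p q. q \<in> L \<longrightarrow> le3 p q \<longrightarrow> p \<in> L)"

definition col :: "nat \<Rightarrow> pt set" where
  "col n = {(0,0,z) | z. z < n}"

definition shift :: "pt set \<Rightarrow> ipt \<Rightarrow> ipt set" where
  "shift S b = (\<lambda>v. addz (emb v) b) ` S"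

definition tower :: "pt set \<Rightarrow> pt set list \<Rightarrow> ipt list \<Rightarrow> bool" where
  "tower L \<nu> b \<longleftrightarrow> young L \<and> length b = length \<nu> \<and>
     (\<forall>i<length \<nu>. \<exists>n\<ge>1. \<nu>!i = col n) \<and>
     (\<forall>i<length \<nu>. \<forall>j<length \<nu>. i \<noteq> j \<longrightarrow> shift (\<nu>!i) (b!i) \<inter> shift (\<nu>!j) (b!j) = {}) \<and>
     (\<forall>i<length \<nu>. shift (\<nu>!i) (b!i) \<subseteq> emb ` L) \<and>
     (\<forall>i<length \<nu>. \<forall>w v. v \<in> \<nu>!i \<longrightarrow> addz (addz (emb v) (b!i)) (emb w) \<in> emb ` L
         \<longrightarrow> addz (emb v) (emb w) \<in> emb ` (\<nu>!i))"

definition compatible_tower :: "pt set \<Rightarrow> pt set \<Rightarrow> pt set list \<Rightarrow> ipt list \<Rightarrow> ipt list \<Rightarrow> bool" where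
  "compatible_tower L M \<nu> b c \<longleftrightarrow> tower L \<nu> b \<and> tower M \<nu> c"

definition ideal :: "ipt set \<Rightarrow> pt set" where
  "ideal T = {p. \<exists>t\<in>T. le3z (emb p) t}"

definition scaffolded :: "pt set \<Rightarrow> pt set list \<Rightarrow> ipt list \<Rightarrow> bool" where
  "scaffolded L \<nu> b \<longleftrightarrow> tower L \<nu> b \<and> L = ideal (\<Union>i<length \<nu>. shift (\<nu>!i) (b!i))"

definition compatible_scaffolded :: "pt set \<Rightarrow> pt set \<Rightarrow> pt set list \<Rightarrow> ipt list \<Rightarrow> ipt list \<Rightarrow> bool" where
  "compatible_scaffolded L M \<nu> b c \<longleftrightarrow>
     compatible_tower L M \<nu> b c \<and> scaffolded L \<nu> b \<and> scaffolded M \<nu> c"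

definition nu_size :: "pt set list \<Rightarrow> nat" where
  "nu_size \<nu> = (\<Sum>i<length \<nu>. card (\<nu>!i))"

definition ct_le :: "pt set \<Rightarrow> pt set \<Rightarrow> pt set list \<Rightarrow> ipt list \<Rightarrow> ipt list \<Rightarrow>
                     pt set \<Rightarrow> pt set \<Rightarrow> pt set list \<Rightarrow> ipt list \<Rightarrow> ipt list \<Rightarrow> bool" where
  "ct_le L M \<nu> b c L' M' \<nu>' b' c' \<longleftrightarrow> L \<subseteq> L' \<and> M \<subseteq> M' \<and>
     (\<exists>\<iota>. inj_on \<iota> {..<length \<nu>} \<and> \<iota> ` {..<length \<nu>} \<subseteq> {..<length \<nu>'} \<and>
          (\<forall>i<length \<nu>. \<nu>!i \<subseteq> \<nu>'!(\<iota> i))) \<and>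
     int (card (L \<inter> M)) - int (nu_size \<nu>) \<le> int (card (L' \<inter> M')) - int (nu_size \<nu>')"

end

theory Submission
  imports Defs
begin

text \<open>Each translated column lies in the diagram, so the ideal generated by the translated
  columns is a Young diagram inside it that still contains them all. The tower conditions pass
  to such sub-diagrams: disjointness does not mention the diagram, and the closure condition
  only weakens as the diagram shrinks. Shrinking both diagrams shrinks their intersection, and
  the identity injection compares the (unchanged) columns.\<close>

lemma le3z_emb_iff [simp]: "le3z (emb p) (emb q) \<longleftrightarrow> le3 p q"
  by (cases p; cases q) auto

lemma le3z_refl: "le3z a a"
  by (cases a) auto

lemma le3z_trans: "le3z a b \<Longrightarrow> le3z b c \<Longrightarrow> le3z a c"
  by (cases a; cases b; cases c) auto

lemma ideal_down_closed:
  assumes "q \<in> ideal T" and "le3 p q"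
  shows "p \<in> ideal T"
proof -
  obtain t where "t \<in> T" and "le3z (emb q) t"
    using assms(1) unfolding ideal_def by blast
  moreover have "le3z (emb p) (emb q)"
    using assms(2) by simp
  ultimately show ?thesis
    unfolding ideal_def using le3z_trans by blast
qed

lemma emb_in_ideal: "emb q \<in> T \<Longrightarrow> q \<in> ideal T"
  unfolding ideal_def using le3z_refl[of "emb q"] by blast

lemma subset_emb_ideal: "T \<subseteq> range emb \<Longrightarrow> T \<subseteq> emb ` ideal T"
  using emb_in_ideal by blast

lemma ideal_subset_young:
  assumes "young L" and "T \<subseteq> emb ` L"
  shows "ideal T \<subseteq> L"
proof
  fix p assume "p \<in> ideal T"
  then obtain t where "t \<in> T" and le: "le3z (emb p) t"
    unfolding ideal_def by blast
  then obtain q where "q \<in> L" and "t = emb q"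
    using assms(2) by blast
  moreover from le \<open>t = emb q\<close> have "le3 p q"
    by simp
  ultimately show "p \<in> L"
    using assms(1) unfolding young_def by blast
qed

lemma young_ideal:
  assumes "young L" and "T \<subseteq> emb ` L"
  shows "young (ideal T)"
proof -
  have "finite (ideal T)"
    using ideal_subset_young[OF assms] assms(1) finite_subset unfolding young_def by blast
  then show ?thesis
    unfolding young_def using ideal_down_closed by blast
qed

lemma tower_scaffold_subset:
  "tower L \<nu> b \<Longrightarrow> (\<Union>i<length \<nu>. shift (\<nu>!i) (b!i)) \<subseteq> emb ` L"
  unfolding tower_def by blast

lemma tower_restrict:
  assumes "tower L \<nu> b" and "young L'" and "L' \<subseteq> L"
    and "(\<Union>i<length \<nu>. shift (\<nu>!i) (b!i)) \<subseteq> emb ` L'"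
  shows "tower L' \<nu> b"
proof -
  have closed_L: "\<forall>i<length \<nu>. \<forall>w v. v \<in> \<nu>!i \<longrightarrow> addz (addz (emb v) (b!i)) (emb w) \<in> emb ` L
      \<longrightarrow> addz (emb v) (emb w) \<in> emb ` (\<nu>!i)"
    using assms(1) unfolding tower_def by simp
  have "\<forall>i<length \<nu>. \<forall>w v. v \<in> \<nu>!i \<longrightarrow> addz (addz (emb v) (b!i)) (emb w) \<in> emb ` L'
      \<longrightarrow> addz (emb v) (emb w) \<in> emb ` (\<nu>!i)"
  proof (intro allI impI)
    fix i w v
    assume "i < length \<nu>" and "v \<in> \<nu>!i" and "addz (addz (emb v) (b!i)) (emb w) \<in> emb ` L'"
    then show "addz (emb v) (emb w) \<in> emb ` (\<nu>!i)"
      using closed_L assms(3) by blast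
  qed
  moreover have "\<forall>i<length \<nu>. shift (\<nu>!i) (b!i) \<subseteq> emb ` L'"
    using assms(4) by blast
  ultimately show ?thesis
    using assms(1,2) unfolding tower_def by simp
qed

lemma tower_scaffold_ideal:
  assumes "tower L \<nu> b"
  defines "S \<equiv> \<Union>i<length \<nu>. shift (\<nu>!i) (b!i)"
  shows "tower (ideal S) \<nu> b" and "ideal S \<subseteq> L"
proof -
  have "young L"
    using assms(1) unfolding tower_def by simp
  moreover have S_sub: "S \<subseteq> emb ` L"
    unfolding S_def using assms(1) by (rule tower_scaffold_subset)
  ultimately show sub: "ideal S \<subseteq> L"
    by (rule ideal_subset_young)
  have "S \<subseteq> emb ` ideal S"
    using S_sub by (intro subset_emb_ideal) blast
  then have "(\<Union>i<length \<nu>. shift (\<nu>!i) (b!i)) \<subseteq> emb ` ideal S"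
    by (simp add: S_def)
  with assms(1) young_ideal[OF \<open>young L\<close> S_sub] sub
  show "tower (ideal S) \<nu> b"
    by (rule tower_restrict)
qed

lemma ct_le_subset:
  assumes "L' \<subseteq> L" and "M' \<subseteq> M" and "finite L"
  shows "ct_le L' M' \<nu> b c L M \<nu> b c"
proof -
  have "card (L' \<inter> M') \<le> card (L \<inter> M)"
    using assms by (intro card_mono) auto
  then show ?thesis
    using assms unfolding ct_le_def by (auto intro!: exI[of _ id])
qed

theorem lemma3p1:
  fixes L M :: "pt set" and \<nu> :: "pt set list" and b c :: "ipt list"
  assumes "compatible_tower L M \<nu> b c"
    and "L' = ideal (\<Union>i<length \<nu>. shift (\<nu>!i) (b!i))"
    and "M' = ideal (\<Union>i<length \<nu>. shift (\<nu>!i) (c!i))"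
  shows "compatible_scaffolded L' M' \<nu> b c \<and> ct_le L' M' \<nu> b c L M \<nu> b c"
proof -
  have TL: "tower L \<nu> b" and TM: "tower M \<nu> c"
    using assms(1) unfolding compatible_tower_def by auto
  have "tower L' \<nu> b" and "L' \<subseteq> L"
    using tower_scaffold_ideal[OF TL] assms(2) by simp_all
  moreover have "tower M' \<nu> c" and "M' \<subseteq> M"
    using tower_scaffold_ideal[OF TM] assms(3) by simp_all
  moreover have "finite L"
    using TL unfolding tower_def young_def by simp
  ultimately show ?thesis
    using assms(2,3) ct_le_subset[of L' L M' M]
    unfolding compatible_scaffolded_def compatible_tower_def scaffolded_def by simp
qed

end
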